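(* Let $\delta\in(0,1)$ and $N,\ell,k\in\mathbb{N}$ satisfy $N\ge 10k\cdot n^{(1-\delta)\ell}$ and $k\ge 20$. If an $n$-vertex graph $G$ contains a clique of size $\lceil n^\delta\rceil$, then with probability at least $0.9$ over $G'\sim \mathrm{RGP}_{N,\ell}(G)$, the graph $G'$ contains a $k$-clique.
   Context: Randomized graph product: given an $n$-vertex graph $G=(V,E)$ and positive integers $N,\ell$, the random graph $G'=(V',E')\sim\mathrm{RGP}_{N,\ell}(G)$ is constructed as follows. For each $i\in[N]$, independently sample $\ell$ vertices uniformly at random from $V$ (independently of each other) and let $S_i\subseteq V$ be the set of sampled vertices. The vertex set is $V'=\{S_1,\dots,S_N\}$ (one vertex per index $i\in[N]$), and for distinct $i,j\in[N]$, $(S_i,S_j)\in E'$ iff $S_i\cup S_j$ induces a clique in $G$. *)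

theory Defs
  imports "HOL-Probability.Probability"
begin

definition simple_graph :: "'a set \<Rightarrow> ('a \<Rightarrow> 'a \<Rightarrow> bool) \<Rightarrow> bool" where
  "simple_graph V E \<longleftrightarrow> finite V \<and> (\<forall>u v. E u v \<longrightarrow> u \<in> V \<and> v \<in> V)
     \<and> (\<forall>u v. E u v \<longrightarrow> E v u) \<and> (\<forall>v. \<not> E v v)"

definition is_clique :: "'a set \<Rightarrow> ('a \<Rightarrow> 'a \<Rightarrow> bool) \<Rightarrow> 'a set \<Rightarrow> bool" where
  "is_clique V E C \<longleftrightarrow> C \<subseteq> V \<and> (\<forall>u\<in>C. \<forall>v\<in>C. u \<noteq> v \<longrightarrow> E u v)"

text \<open>A sample is a function s on [N] x [l] with values in V;
  drawing s uniformly among all such functions is the same as drawing all N*l vertices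
  independently and uniformly. The i-th vertex of G' is S_i = s ` ({i} x [l]).\<close>
definition rgp_samples :: "'a set \<Rightarrow> nat \<Rightarrow> nat \<Rightarrow> (nat \<times> nat \<Rightarrow> 'a) pmf" where
  "rgp_samples V N l = pmf_of_set (PiE ({..<N} \<times> {..<l}) (\<lambda>_. V))"

definition rgp_set :: "nat \<Rightarrow> (nat \<times> nat \<Rightarrow> 'a) \<Rightarrow> nat \<Rightarrow> 'a set" where
  "rgp_set l s i = s ` ({i} \<times> {..<l})"

definition rgp_edge :: "'a set \<Rightarrow> ('a \<Rightarrow> 'a \<Rightarrow> bool) \<Rightarrow> nat \<Rightarrow> nat \<Rightarrow> (nat \<times> nat \<Rightarrow> 'a) \<Rightarrow> nat \<Rightarrow> nat \<Rightarrow> bool" where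
  "rgp_edge V E N l s i j \<longleftrightarrow> i < N \<and> j < N \<and> i \<noteq> j \<and>
     is_clique V E (rgp_set l s i \<union> rgp_set l s j)"

definition rgp_has_clique :: "'a set \<Rightarrow> ('a \<Rightarrow> 'a \<Rightarrow> bool) \<Rightarrow> nat \<Rightarrow> nat \<Rightarrow> nat \<Rightarrow> (nat \<times> nat \<Rightarrow> 'a) \<Rightarrow> bool" where
  "rgp_has_clique V E N l k s \<longleftrightarrow>
     (\<exists>K. card K = k \<and> is_clique {..<N} (rgp_edge V E N l s) K)"

end

theory Submission
  imports Defs
begin

text \<open>Fix a clique \<open>C\<close> of size \<open>\<lceil>n\<^bsup>\<delta>\<^esup>\<rceil>\<close>. The events \<open>S\<^sub>i \<subseteq> C\<close> are independent, each
  of probability \<open>p = (|C|/n)\<^bsup>l\<^esup> \<ge> n\<^bsup>-(1-\<delta>)l\<^esup>\<close>, and any \<open>k\<close> indices \<open>i\<close> with \<open>S\<^sub>i \<subseteq> C\<close>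
  form a \<open>k\<close>-clique of \<open>G'\<close>. Their number \<open>X\<close> has mean \<open>\<mu> = N p \<ge> 10 k\<close> and variance at
  most \<open>\<mu>\<close>, so Chebyshev's inequality gives \<open>P(X < k) \<le> \<mu> / (\<mu> - k)\<^sup>2 \<le> 1 / (0.81 \<mu>) \<le> 0.1\<close>.\<close>

lemma PiE_dflt_undefined: "PiE_dflt A undefined B = PiE A B"
  by (auto simp: PiE_dflt_def PiE_def extensional_def)

lemma rgp_samples_eq_Pi_pmf:
  assumes "finite V" "V \<noteq> {}"
  shows "rgp_samples V N l = Pi_pmf ({..<N} \<times> {..<l}) undefined (\<lambda>_. pmf_of_set V)"
  using assms by (simp add: rgp_samples_def Pi_pmf_of_set PiE_dflt_undefined)

lemma prob_rgp_sets_subset: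
  assumes "finite V" "V \<noteq> {}" "C \<subseteq> V" "B \<subseteq> {..<N}"
  shows "measure_pmf.prob (rgp_samples V N l) {s. \<forall>i\<in>B. rgp_set l s i \<subseteq> C}
           = ((card C / card V) ^ l) ^ card B"
proof -
  have event: "{s. \<forall>i\<in>B. rgp_set l s i \<subseteq> C}
      = Pi ({..<N} \<times> {..<l}) (\<lambda>x. if fst x \<in> B then C else UNIV)"
    using assms(4) by (auto simp: rgp_set_def Pi_def image_subset_iff)
  have blocks: "{x \<in> {..<N} \<times> {..<l}. fst x \<in> B} = B \<times> {..<l}"
    using assms(4) by auto
  have "measure_pmf.prob (rgp_samples V N l) {s. \<forall>i\<in>B. rgp_set l s i \<subseteq> C}
      = (\<Prod>x\<in>{..<N} \<times> {..<l}. if fst x \<in> B then card C / card V else 1)"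
    unfolding event using assms
    by (simp add: rgp_samples_eq_Pi_pmf measure_Pi_pmf_Pi measure_pmf_of_set Int_absorb1
        if_distrib cong: if_cong)
  also have "\<dots> = (card C / card V) ^ card (B \<times> {..<l})"
    by (simp add: prod.If_cases Int_def blocks)
  finally show ?thesis
    by (simp add: card_cartesian_product mult.commute flip: power_mult)
qed

lemma count_eq_sum_indicator:
  "finite I \<Longrightarrow> real (card {i\<in>I. \<omega> \<in> A i}) = (\<Sum>i\<in>I. indicator (A i) \<omega>)"
  by (simp add: indicator_def sum.If_cases Int_def conj_commute)

lemma expectation_sum_indicator:
  "measure_pmf.expectation M (\<lambda>\<omega>. \<Sum>i\<in>I. indicator (A i) \<omega> :: real)
     = (\<Sum>i\<in>I. measure_pmf.prob M (A i))"
  by (subst Bochner_Integration.integral_sum)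
    (auto intro: measure_pmf.integrable_const_bound [where B = 1])

lemma expectation_sum_indicator_squared:
  "measure_pmf.expectation M (\<lambda>\<omega>. (\<Sum>i\<in>I. indicator (A i) \<omega> :: real)\<^sup>2)
     = (\<Sum>i\<in>I. \<Sum>j\<in>I. measure_pmf.prob M (A i \<inter> A j))"
proof -
  have "(\<lambda>\<omega>. (\<Sum>i\<in>I. indicator (A i) \<omega> :: real)\<^sup>2)
      = (\<lambda>\<omega>. \<Sum>(i, j)\<in>I \<times> I. indicator (A i \<inter> A j) \<omega>)"
    by (simp add: power2_eq_square sum_product indicator_inter_arith sum.cartesian_product)
  then show ?thesis
    by (simp add: expectation_sum_indicator sum.cartesian_product case_prod_unfold)
qed

lemma prob_few_events_le:
  fixes M :: "'a pmf" and A :: "'i \<Rightarrow> 'a set" and p k :: real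
  assumes "finite I"
    and prob_A: "\<And>i. i \<in> I \<Longrightarrow> measure_pmf.prob M (A i) = p"
    and prob_AA: "\<And>i j. i \<in> I \<Longrightarrow> j \<in> I \<Longrightarrow> i \<noteq> j
                    \<Longrightarrow> measure_pmf.prob M (A i \<inter> A j) = p\<^sup>2"
    and "k < card I * p"
  shows "measure_pmf.prob M {\<omega>. card {i\<in>I. \<omega> \<in> A i} < k}
           \<le> card I * p / (card I * p - k)\<^sup>2"
proof -
  define X where "X = (\<lambda>\<omega>. \<Sum>i\<in>I. indicator (A i) \<omega> :: real)"
  have X_bounded: "\<bar>X \<omega>\<bar> \<le> card I" for \<omega>
    using sum_bounded_above [of I "\<lambda>i. indicator (A i) \<omega> :: real" 1]
    by (simp add: X_def sum_nonneg)
  have int_X: "integrable M X"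
    using X_bounded by (intro measure_pmf.integrable_const_bound [where B = "card I"]) simp_all
  have int_X2: "integrable M (\<lambda>\<omega>. X \<omega> ^ 2)"
    using X_bounded by (intro measure_pmf.integrable_const_bound [where B = "card I ^ 2"])
      (simp_all add: abs_le_square_iff [symmetric])
  have EX: "measure_pmf.expectation M X = card I * p"
    using prob_A by (simp add: X_def expectation_sum_indicator)
  have row: "(\<Sum>j\<in>I. measure_pmf.prob M (A i \<inter> A j)) = p + (real (card I) - 1) * p\<^sup>2"
    if "i \<in> I" for i
  proof -
    have "(\<Sum>j\<in>I. measure_pmf.prob M (A i \<inter> A j))
        = measure_pmf.prob M (A i) + (\<Sum>j\<in>I - {i}. measure_pmf.prob M (A i \<inter> A j))"
      using \<open>finite I\<close> that by (simp add: sum.remove)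
    also have "(\<Sum>j\<in>I - {i}. measure_pmf.prob M (A i \<inter> A j)) = (\<Sum>j\<in>I - {i}. p\<^sup>2)"
      using that by (intro sum.cong) (auto simp: prob_AA)
    finally show ?thesis
      using that \<open>finite I\<close> card_Suc_Diff1 [of I i] by (simp add: prob_A)
  qed
  have "measure_pmf.variance M X
      = measure_pmf.expectation M (\<lambda>\<omega>. X \<omega> ^ 2) - (measure_pmf.expectation M X)\<^sup>2"
    by (rule measure_pmf.variance_eq [OF int_X int_X2])
  also have "\<dots> = card I * p - card I * p\<^sup>2"
    unfolding EX unfolding X_def expectation_sum_indicator_squared
    by (simp add: row algebra_simps power2_eq_square)
  finally have var_X: "measure_pmf.variance M X \<le> card I * p"
    by simp
  have "{\<omega>. card {i\<in>I. \<omega> \<in> A i} < k} \<subseteq> {\<omega>. \<bar>X \<omega> - card I * p\<bar> \<ge> card I * p - k}"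
    using assms(1) by (auto simp: X_def count_eq_sum_indicator)
  then have "measure_pmf.prob M {\<omega>. card {i\<in>I. \<omega> \<in> A i} < k}
      \<le> measure_pmf.variance M X / (card I * p - k)\<^sup>2"
    using measure_pmf.Chebyshev_inequality [OF _ int_X2, of "card I * p - k"] assms(4) EX
    by (auto intro: order_trans [OF measure_pmf.finite_measure_mono])
  also have "\<dots> \<le> card I * p / (card I * p - k)\<^sup>2"
    using var_X by (intro divide_right_mono) auto
  finally show ?thesis .
qed

lemma prob_few_rgp_sets_in_subset_le:
  fixes k :: real
  assumes V: "finite V" "V \<noteq> {}" "C \<subseteq> V"
    and "k < N * (card C / card V) ^ l"
  shows "measure_pmf.prob (rgp_samples V N l) {s. card {i\<in>{..<N}. rgp_set l s i \<subseteq> C} < k}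
           \<le> N * (card C / card V) ^ l / (N * (card C / card V) ^ l - k)\<^sup>2"
proof -
  define p where "p = (card C / card V) ^ l"
  define A where "A i = {s. rgp_set l s i \<subseteq> C}" for i
  have "measure_pmf.prob (rgp_samples V N l) (A i) = p" if "i < N" for i
    using prob_rgp_sets_subset [OF V, of "{i}"] that by (simp add: A_def p_def)
  moreover have "measure_pmf.prob (rgp_samples V N l) (A i \<inter> A j) = p\<^sup>2"
    if "i < N" "j < N" "i \<noteq> j" for i j
    using prob_rgp_sets_subset [OF V, of "{i, j}"] that
    by (simp add: A_def p_def Collect_conj_eq power2_eq_square)
  ultimately show ?thesis
    using prob_few_events_le [of "{..<N}" "rgp_samples V N l" A p k] assms(4)
    by (simp add: A_def p_def)
qed

lemma is_clique_subset: "is_clique V E C \<Longrightarrow> A \<subseteq> C \<Longrightarrow> is_clique V E A"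
  unfolding is_clique_def by (meson subsetD subset_trans)

lemma rgp_has_clique_if_many_sets_in_clique:
  assumes "is_clique V E C" and "k \<le> card {i\<in>{..<N}. rgp_set l s i \<subseteq> C}"
  shows "rgp_has_clique V E N l k s"
proof -
  obtain K where K: "K \<subseteq> {i\<in>{..<N}. rgp_set l s i \<subseteq> C}" "card K = k"
    using assms(2) by (meson obtain_subset_with_card_n)
  have "rgp_edge V E N l s i j" if "i \<in> K" "j \<in> K" "i \<noteq> j" for i j
  proof -
    have "rgp_set l s i \<union> rgp_set l s j \<subseteq> C" "i < N" "j < N"
      using that K(1) by auto
    then show ?thesis
      using \<open>i \<noteq> j\<close> is_clique_subset [OF assms(1)] by (simp add: rgp_edge_def)
  qed
  moreover have "K \<subseteq> {..<N}"
    using K(1) by blast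
  ultimately show ?thesis
    using K(2) unfolding rgp_has_clique_def is_clique_def by blast
qed

lemma powr_le_ratio_power:
  fixes n c \<delta> :: real
  assumes "0 < n" and "n powr \<delta> \<le> c"
  shows "n powr ((\<delta> - 1) * l) \<le> (c / n) ^ l"
proof -
  have "n powr ((\<delta> - 1) * l) = (n powr (\<delta> - 1)) powr l"
    by (rule powr_powr [symmetric])
  also have "\<dots> = (n powr (\<delta> - 1)) ^ l"
    using assms(1) by (simp add: powr_realpow)
  also have "n powr (\<delta> - 1) = n powr \<delta> / n"
    using assms(1) by (simp add: powr_diff)
  also have "(n powr \<delta> / n) ^ l \<le> (c / n) ^ l"
    using assms by (intro power_mono divide_right_mono) auto
  finally show ?thesis .
qed

lemma le_mult_ratio_power:
  fixes n c \<delta> a b :: real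
  assumes "0 < n" and "n powr \<delta> \<le> c"
    and "0 \<le> a" and "a * n powr ((1 - \<delta>) * l) \<le> b"
  shows "a \<le> b * (c / n) ^ l"
proof -
  have "(1 - \<delta>) * l + (\<delta> - 1) * l = 0"
    by (simp add: algebra_simps)
  then have "a = a * n powr ((1 - \<delta>) * l) * n powr ((\<delta> - 1) * l)"
    using assms(1) by (simp add: mult.assoc flip: powr_add)
  also have "\<dots> \<le> b * (c / n) ^ l"
    using assms order_trans [OF mult_nonneg_nonneg [OF assms(3) powr_ge_zero] assms(4)]
    by (intro mult_mono powr_le_ratio_power) auto
  finally show ?thesis .
qed

lemma mean_over_gap_squared_le:
  fixes \<mu> k :: real
  assumes "10 * k \<le> \<mu>" and "20 \<le> k"
  shows "\<mu> / (\<mu> - k)\<^sup>2 \<le> 0.1"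
proof -
  have "200 * \<mu> \<le> \<mu> * \<mu>"
    using assms by (intro mult_right_mono) auto
  then have "10 * \<mu> \<le> (0.9 * \<mu>)\<^sup>2"
    using assms by (simp add: power2_eq_square)
  also have "\<dots> \<le> (\<mu> - k)\<^sup>2"
    using assms by (intro power_mono) auto
  finally show ?thesis
    using assms by (simp add: pos_divide_le_eq)
qed

theorem lemma2p1:
  fixes V :: "'a set" and E :: "'a \<Rightarrow> 'a \<Rightarrow> bool" and n N l k :: nat and \<delta> :: real
  assumes "simple_graph V E" and "card V = n" and "n \<ge> 1"
    and "0 < \<delta>" and "\<delta> < 1"
    and "real N \<ge> 10 * real k * real n powr ((1 - \<delta>) * real l)"
    and "k \<ge> 20"
    and "\<exists>C. is_clique V E C \<and> card C = nat \<lceil>real n powr \<delta>\<rceil>"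
  shows "measure_pmf.prob (rgp_samples V N l) {s. rgp_has_clique V E N l k s} \<ge> 0.9"
proof -
  obtain C where C: "is_clique V E C" and card_C: "card C = nat \<lceil>real n powr \<delta>\<rceil>"
    using assms(8) by blast
  have V: "finite V" "V \<noteq> {}" "C \<subseteq> V"
    using assms(2,3) C by (auto simp: is_clique_def intro: card_ge_0_finite)
  define \<mu> where "\<mu> = N * (card C / card V) ^ l"
  define few where "few = {s. card {i\<in>{..<N}. rgp_set l s i \<subseteq> C} < real k}"
  have mean: "10 * real k \<le> \<mu>"
    unfolding \<mu>_def assms(2) using assms(3,6) card_C by (intro le_mult_ratio_power) auto
  have "real k < \<mu>"
    using mean assms(7) by simp
  then have "measure_pmf.prob (rgp_samples V N l) few \<le> \<mu> / (\<mu> - k)\<^sup>2"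
    unfolding few_def \<mu>_def by (rule prob_few_rgp_sets_in_subset_le [OF V])
  also have "\<dots> \<le> 0.1"
    using mean assms(7) by (intro mean_over_gap_squared_le) auto
  finally have "0.9 \<le> measure_pmf.prob (rgp_samples V N l) (UNIV - few)"
    using measure_pmf.prob_compl [of few "rgp_samples V N l"] by simp
  also have "\<dots> \<le> measure_pmf.prob (rgp_samples V N l) {s. rgp_has_clique V E N l k s}"
    using C by (intro measure_pmf.finite_measure_mono)
      (auto simp: few_def not_less intro: rgp_has_clique_if_many_sets_in_clique)
  finally show ?thesis .
qed

end
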